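(* Let $0<s<1$ and $\phi\in B$. The operator $T_\phi$ defined by $$T_\phi w(x)=[\Lambda^s,\phi]w(x)=\Lambda^s(\phi w)(x)-\phi(x)\Lambda^s w(x)=C_s\int_{\mathbb{R}^2}\frac{(\phi(x)-\phi(y))\,w(y)}{|x-y|^{2+s}}\,dy$$ is continuous from $L^2_{uloc}(\mathbb{R}^2)$ to $L^2_{uloc}(\mathbb{R}^2)$.
   Context: $\Lambda^s f(x)=C_s\,\mathrm{P.V.}\int\frac{f(x)-f(y)}{|x-y|^{2+s}}dy$. Fix smooth $\phi_0$ with $0\le\phi_0\le1$, $\phi_0=1$ on $|x|\le2$, $\phi_0=0$ on $|x|\ge3$, and $B=\{\phi_0(\cdot-k):k\in\mathbb{Z}^2\}$. $L^2_{uloc}$ is the space of $f\in L^2_{loc}$ with $\|f\|_{L^2_{uloc}}=\sup_{\phi\in B}\|\phi f\|_{L^2}<\infty$. *)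

theory Defs
  imports "HOL-Analysis.Analysis"
begin

definition pdiff2 :: "2 \<Rightarrow> (real^2 \<Rightarrow> real) \<Rightarrow> real^2 \<Rightarrow> real" where
  "pdiff2 i f x = deriv (\<lambda>t. f (x + t *\<^sub>R axis i 1)) 0"

definition smooth2 :: "(real^2 \<Rightarrow> real) \<Rightarrow> bool" where
  "smooth2 f \<longleftrightarrow> (\<forall>is :: 2 list. (foldr pdiff2 is f) differentiable_on UNIV)"

text \<open>Normalising constant of the fractional Laplacian in dimension 2.\<close>
definition frac_const :: "real \<Rightarrow> real" where
  "frac_const s = 2 powr s * Gamma (1 + s / 2) / (pi * \<bar>Gamma (- s / 2)\<bar>)"

definition Bset :: "(real^2 \<Rightarrow> real) \<Rightarrow> (real^2 \<Rightarrow> real) set" where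
  "Bset \<phi>0 = {(\<lambda>x. \<phi>0 (x - k)) | k :: real^2. \<forall>i. k $ i \<in> \<int>}"

definition L2loc :: "(real^2 \<Rightarrow> real) set" where
  "L2loc = {f. f \<in> borel_measurable lebesgue \<and>
      (\<forall>K. compact K \<longrightarrow> set_integrable lebesgue K (\<lambda>x. (f x)\<^sup>2))}"

definition l2norm :: "(real^2 \<Rightarrow> real) \<Rightarrow> real" where
  "l2norm f = sqrt (LINT x|lebesgue. (f x)\<^sup>2)"

definition L2uloc :: "(real^2 \<Rightarrow> real) \<Rightarrow> (real^2 \<Rightarrow> real) set" where
  "L2uloc \<phi>0 = {f \<in> L2loc. bdd_above ((\<lambda>\<phi>. l2norm (\<lambda>x. \<phi> x * f x)) ` Bset \<phi>0)}"

definition uloc_norm :: "(real^2 \<Rightarrow> real) \<Rightarrow> (real^2 \<Rightarrow> real) \<Rightarrow> real" where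
  "uloc_norm \<phi>0 f = (SUP \<phi>\<in>Bset \<phi>0. l2norm (\<lambda>x. \<phi> x * f x))"

definition Tcomm :: "real \<Rightarrow> (real^2 \<Rightarrow> real) \<Rightarrow> (real^2 \<Rightarrow> real) \<Rightarrow> real^2 \<Rightarrow> real" where
  "Tcomm s \<phi> w x = frac_const s *
     (LINT y|lebesgue. (\<phi> x - \<phi> y) * w y / norm (x - y) powr (2 + s))"

end

theory Submission
  imports Defs
begin

text \<open>
  Since \<open>\<bar>\<phi> x - \<phi> y\<bar> \<le> min (B * \<bar>x - y\<bar>) 1\<close>, the kernel of \<open>T\<^sub>\<phi>\<close> is dominated by
  \<open>k (x - y)\<close>, where \<open>k z = B \<bar>z\<bar> powr (-1-s)\<close> for \<open>\<bar>z\<bar> < 1\<close> and \<open>k z = \<bar>z\<bar> powr (-2-s)\<close>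
  otherwise; for \<open>0 < s < 1\<close> this \<open>k\<close> is integrable over the plane (sum over dyadic shells).
  By Cauchy-Schwarz, \<open>\<bar>T\<^sub>\<phi> w x\<bar>\<^sup>2 \<le> \<parallel>k\<parallel>\<^sub>1 \<integral> k (x - y) (w y)\<^sup>2 dy\<close>. Integrating this against the
  translate of \<open>\<phi>\<^sub>0\<close> centred at \<open>c\<close> and exchanging the integrals, the mass of \<open>k (x - y)\<close> over
  \<open>x \<in> cball c 3\<close> is \<open>O ((2 + \<bar>y - c\<bar>) powr (-2-s))\<close>. Each unit cell of \<open>\<int>\<^sup>2\<close> lies where some
  translate of \<open>\<phi>\<^sub>0\<close> equals 1, and on the cell with offset \<open>m\<close> from \<open>c\<close> this weight is at most
  \<open>((1 + \<bar>m\<^sub>1\<bar>) (1 + \<bar>m\<^sub>2\<bar>)) powr (-1 - s/2)\<close>, which is summable over \<open>\<int>\<^sup>2\<close>. Hence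
  \<open>\<parallel>T\<^sub>\<phi> w\<parallel>\<^sub>u\<^sub>l\<^sub>o\<^sub>c \<le> C \<parallel>w\<parallel>\<^sub>u\<^sub>l\<^sub>o\<^sub>c\<close>, and since \<open>T\<^sub>\<phi>\<close> is linear up to null sets, it is continuous.
\<close>

section \<open>Smooth cutoffs are Lipschitz\<close>

lemma pdiff2_eq_derivative:
  assumes "(f has_derivative D) (at x)"
  shows "pdiff2 i f x = D (axis i 1)"
proof -
  have g: "((\<lambda>t::real. x + t *\<^sub>R axis i 1) has_derivative (\<lambda>t. t *\<^sub>R axis i 1)) (at 0)"
    by (auto intro!: derivative_eq_intros)
  have "((\<lambda>t. f (x + t *\<^sub>R axis i 1)) has_derivative (\<lambda>t. D (t *\<^sub>R axis i 1))) (at 0)"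
    using has_derivative_compose[OF g, of f D] assms by simp
  moreover have "(\<lambda>t. D (t *\<^sub>R axis i 1)) = (\<lambda>t. D (axis i 1) * t)"
    using has_derivative_linear[OF assms] by (simp add: linear_scale mult.commute)
  ultimately have "((\<lambda>t. f (x + t *\<^sub>R axis i 1)) has_field_derivative D (axis i 1)) (at 0)"
    by (simp add: has_field_derivative_def)
  then show ?thesis unfolding pdiff2_def by (rule DERIV_imp_deriv)
qed

lemma vec2_eq_axis_sum: "(h::real^2) = h$1 *\<^sub>R axis 1 1 + h$2 *\<^sub>R axis 2 1"
  by (simp add: vec_eq_iff forall_2 axis_def)

lemma pdiff2_eq_0_outside:
  assumes vanish: "\<And>x. R \<le> norm x \<Longrightarrow> f x = 0" and x: "R < norm x"
  shows "pdiff2 i f x = 0"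
proof -
  have "((\<lambda>t. f (x + t *\<^sub>R axis i 1)) has_field_derivative 0) (at 0)"
  proof (rule has_field_derivative_transform_within_open[where S="ball 0 (norm x - R)"])
    show "((\<lambda>t::real. 0::real) has_field_derivative 0) (at 0)" by simp
    show "(0::real) \<in> ball 0 (norm x - R)" using x by simp
    fix t :: real assume "t \<in> ball 0 (norm x - R)"
    moreover have "norm x - \<bar>t\<bar> \<le> norm (x + t *\<^sub>R axis i 1)"
      using norm_diff_ineq[of x "t *\<^sub>R axis i 1"] by simp
    ultimately show "0 = f (x + t *\<^sub>R axis i 1)" using vanish by simp
  qed simp
  then show ?thesis unfolding pdiff2_def by (rule DERIV_imp_deriv)
qed

lemma smooth2_pdiff2_bounded:
  assumes smooth: "smooth2 f" and vanish: "\<And>x. R \<le> norm x \<Longrightarrow> f x = 0"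
  obtains M where "\<And>x. \<bar>pdiff2 i f x\<bar> \<le> M"
proof -
  have "pdiff2 i f differentiable_on UNIV"
    using smooth[unfolded smooth2_def, rule_format, of "[i]"] by simp
  then have "continuous_on (cball 0 R) (pdiff2 i f)"
    using differentiable_imp_continuous_on continuous_on_subset by blast
  then have "compact (pdiff2 i f ` cball 0 R)" by (rule compact_continuous_image) simp
  then obtain M where M: "\<forall>y\<in>pdiff2 i f ` cball 0 R. norm y \<le> M"
    using compact_imp_bounded bounded_iff by metis
  have "\<bar>pdiff2 i f x\<bar> \<le> max M 0" for x
  proof (cases "norm x \<le> R")
    case True
    then have "\<bar>pdiff2 i f x\<bar> \<le> M" using M by (simp add: dist_norm)
    then show ?thesis by simp
  next
    case False
    then show ?thesis using pdiff2_eq_0_outside[of R f x i] vanish by simp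
  qed
  then show thesis by (rule that)
qed

lemma smooth2_lipschitz:
  assumes smooth: "smooth2 f" and vanish: "\<And>x. R \<le> norm x \<Longrightarrow> f x = 0"
  obtains B where "0 \<le> B" and "\<And>x y. \<bar>f x - f y\<bar> \<le> B * norm (x - y)"
proof -
  obtain M1 where M1: "\<And>x. \<bar>pdiff2 1 f x\<bar> \<le> M1" using smooth2_pdiff2_bounded[OF smooth vanish, where i=1] by blast
  obtain M2 where M2: "\<And>x. \<bar>pdiff2 2 f x\<bar> \<le> M2" using smooth2_pdiff2_bounded[OF smooth vanish, where i=2] by blast
  have "f differentiable_on UNIV"
    using smooth[unfolded smooth2_def, rule_format, of "[]"] by simp
  then have deriv: "(f has_derivative frechet_derivative f (at x)) (at x)" for x
    by (simp add: differentiable_on_def frechet_derivative_works[symmetric])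
  have onorm: "onorm (frechet_derivative f (at x)) \<le> M1 + M2" for x
  proof (rule onorm_le)
    fix h :: "real^2"
    let ?D = "frechet_derivative f (at x)"
    have lin: "linear ?D" using has_derivative_linear[OF deriv] .
    have "?D h = h$1 * ?D (axis 1 1) + h$2 * ?D (axis 2 1)"
      by (subst vec2_eq_axis_sum) (simp add: linear_add[OF lin] linear_scale[OF lin])
    also have "\<dots> = h$1 * pdiff2 1 f x + h$2 * pdiff2 2 f x"
      using pdiff2_eq_derivative[OF deriv] by simp
    finally have "norm (?D h) \<le> \<bar>h$1\<bar> * \<bar>pdiff2 1 f x\<bar> + \<bar>h$2\<bar> * \<bar>pdiff2 2 f x\<bar>"
      by (metis abs_mult abs_triangle_ineq real_norm_def)
    also have "\<dots> \<le> norm h * M1 + norm h * M2"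
      by (intro add_mono mult_mono M1 M2 component_le_norm_cart) auto
    finally show "norm (?D h) \<le> (M1 + M2) * norm h" by (simp add: algebra_simps)
  qed
  have "0 \<le> M1 + M2" using M1[of 0] M2[of 0] by linarith
  moreover have "\<bar>f x - f y\<bar> \<le> (M1 + M2) * norm (x - y)" for x y
    using differentiable_bound[of UNIV f "\<lambda>x. frechet_derivative f (at x)" "M1 + M2" x y]
      deriv onorm by simp
  ultimately show thesis by (rule that)
qed

section \<open>An integrable majorant of the commutator kernel\<close>

definition kernel_majorant :: "real \<Rightarrow> real \<Rightarrow> real^2 \<Rightarrow> real" where
  "kernel_majorant L s z =
     (if z = 0 then 0 else if norm z < 1 then L * norm z powr (-1-s) else norm z powr (-2-s))"

lemma kernel_majorant_nonneg: "0 \<le> L \<Longrightarrow> 0 \<le> kernel_majorant L s z"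
  by (simp add: kernel_majorant_def)

lemma kernel_majorant_measurable [measurable]: "kernel_majorant L s \<in> borel_measurable borel"
  unfolding kernel_majorant_def by measurable

lemma kernel_majorant_minus_commute: "kernel_majorant L s (x - y) = kernel_majorant L s (y - x)"
  by (simp add: kernel_majorant_def norm_minus_commute)

definition kernel_mass :: "real \<Rightarrow> real \<Rightarrow> ennreal" where
  "kernel_mass L s = (\<integral>\<^sup>+ z. ennreal (kernel_majorant L s z) \<partial>lborel)"

lemma kernel_majorant_le_inner_shell:
  assumes L: "0 \<le> L" and s: "0 < s" and z: "z \<noteq> 0" "norm z < 1"
  obtains n :: nat where "norm z \<le> 2 powr (-real n)"
    and "kernel_majorant L s z \<le> L * (2 powr (-real n - 1)) powr (-1-s)"
proof -
  define k where "k = \<lfloor>log 2 (norm z)\<rfloor>"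
  have nz: "norm z > 0" using z by simp
  have k: "2 powr real_of_int k \<le> norm z \<and> norm z < 2 powr real_of_int (k+1)"
    using floor_log_eq_powr_iff[OF nz, of 2 k] k_def by simp
  have "k < 0"
  proof (rule ccontr)
    assume "\<not> k < 0"
    then have "(1::real) \<le> 2 powr real_of_int k" by (intro ge_one_powr_ge_zero) auto
    then show False using k z by linarith
  qed
  define n where "n = nat (-k-1)"
  have kn: "real_of_int k = -real n - 1" using \<open>k < 0\<close> n_def by simp
  have "norm z \<le> 2 powr (-real n)" using k kn by simp
  moreover have "norm z powr (-1-s) \<le> (2 powr (-real n - 1)) powr (-1-s)"
    using k kn s by (intro powr_mono2') auto
  then have "kernel_majorant L s z \<le> L * (2 powr (-real n - 1)) powr (-1-s)"
    using z L by (simp add: kernel_majorant_def mult_left_mono)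
  ultimately show thesis by (rule that)
qed

lemma kernel_majorant_le_outer_shell:
  assumes s: "0 < s" and z: "\<not> norm z < 1"
  obtains n :: nat where "norm z \<le> 2 powr (real n + 1)"
    and "kernel_majorant L s z \<le> (2 powr real n) powr (-2-s)"
proof -
  define k where "k = \<lfloor>log 2 (norm z)\<rfloor>"
  have nz: "norm z > 0" using z by linarith
  have k: "2 powr real_of_int k \<le> norm z \<and> norm z < 2 powr real_of_int (k+1)"
    using floor_log_eq_powr_iff[OF nz, of 2 k] k_def by simp
  have "k \<ge> 0"
  proof (rule ccontr)
    assume "\<not> k \<ge> 0"
    then have "real_of_int k + 1 \<le> 0" by linarith
    then have "2 powr (real_of_int k + 1) \<le> 2 powr 0" by (intro powr_mono) auto
    then show False using k z by simp
  qed
  define n where "n = nat k"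
  have kn: "real_of_int k = real n" using \<open>k \<ge> 0\<close> n_def by simp
  have "norm z \<le> 2 powr (real n + 1)" using k kn by simp
  moreover have "norm z powr (-2-s) \<le> (2 powr real n) powr (-2-s)"
    using k kn s by (intro powr_mono2') auto
  then have "kernel_majorant L s z \<le> (2 powr real n) powr (-2-s)"
    using z nz by (auto simp add: kernel_majorant_def)
  ultimately show thesis by (rule that)
qed

lemma inner_shell_term_eq:
  "(2 powr (-real n - 1)) powr (-1-s) * (2 * 2 powr (-real n))^2 = 4 * 2 powr (1+s) * (2 powr (s-1))^n"
proof -
  have "(2 powr (-real n - 1)) powr (-1-s) = 2 powr ((real n + 1) * (1+s))"
    by (simp add: powr_powr algebra_simps)
  moreover have "(2 * 2 powr (-real n))^2 = 4 * 2 powr (-2 * real n)"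
    by (simp add: power2_eq_square powr_add[symmetric])
  moreover have "(2 powr (s-1))^n = 2 powr (real n * (s-1))"
    by (simp add: powr_realpow[symmetric] powr_powr mult.commute)
  ultimately show ?thesis
    by (simp add: powr_add[symmetric] algebra_simps)
qed

lemma outer_shell_term_eq:
  "(2 powr real n) powr (-2-s) * (2 * 2 powr (real n + 1))^2 = 16 * (2 powr (-s))^n"
proof -
  have "(2 powr real n) powr (-2-s) = 2 powr (real n * (-2-s))"
    by (simp add: powr_powr)
  moreover have "(2 * 2 powr (real n + 1))^2 = 16 * 2 powr (2 * real n)"
    by (simp add: power2_eq_square powr_add[symmetric] algebra_simps) (simp add: powr_add)
  moreover have "(2 powr (-s))^n = 2 powr (real n * (-s))"
    by (simp add: powr_realpow[symmetric] powr_powr mult.commute)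
  ultimately show ?thesis
    by (simp add: powr_add[symmetric] algebra_simps)
qed

lemma pred_in_cball [measurable]: "Measurable.pred borel (\<lambda>x::'a::metric_space. x \<in> cball c r)"
  using borel_closed[OF closed_cball, of c r] unfolding pred_def by (simp del: mem_cball)

lemma emeasure_cball_le:
  assumes "0 \<le> r"
  shows "emeasure lborel (cball (c::real^2) r) \<le> ennreal ((2*r)^2)"
proof -
  have sub: "cball c r \<subseteq> cbox (c - r *\<^sub>R 1) (c + r *\<^sub>R 1)"
  proof
    fix x assume "x \<in> cball c r"
    then have "norm (x - c) \<le> r" by (simp add: dist_norm norm_minus_commute)
    then have "\<bar>(x - c)$i\<bar> \<le> r" for i using component_le_norm_cart[of "x-c" i] by linarith
    then show "x \<in> cbox (c - r *\<^sub>R 1) (c + r *\<^sub>R 1)"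
      by (simp add: mem_box_cart abs_le_iff algebra_simps)
  qed
  have basis: "(Basis::(real^2) set) = {axis 1 1, axis 2 1}"
    unfolding Basis_vec_def by (auto, metis exhaust_2)
  have "axis 1 (1::real) \<noteq> (axis 2 1 :: real^2)" by (simp add: axis_eq_axis)
  then have "emeasure lborel (cbox (c - r *\<^sub>R 1) (c + r *\<^sub>R 1)) = ennreal ((2*r)^2)"
    using assms by (simp add: emeasure_lborel_cbox_eq basis inner_axis power2_eq_square)
  then show ?thesis using emeasure_mono[OF sub, of lborel] by simp
qed

lemma nn_integral_suminf_cball_finite:
  fixes a r :: "nat \<Rightarrow> real"
  assumes a: "\<And>n. 0 \<le> a n" and r: "\<And>n. 0 \<le> r n" and sum: "summable (\<lambda>n. a n * (2 * r n)^2)"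
  shows "(\<integral>\<^sup>+ z. (\<Sum>n. ennreal (a n) * indicator (cball (0::real^2) (r n)) z) \<partial>lborel) < \<infinity>"
proof -
  have "(\<integral>\<^sup>+ z. (\<Sum>n. ennreal (a n) * indicator (cball (0::real^2) (r n)) z) \<partial>lborel)
      = (\<Sum>n. \<integral>\<^sup>+ z. ennreal (a n) * indicator (cball (0::real^2) (r n)) z \<partial>lborel)"
    by (rule nn_integral_suminf) (simp add: borel_measurable_times_ennreal)
  also have "\<dots> = (\<Sum>n. ennreal (a n) * emeasure lborel (cball (0::real^2) (r n)))"
    by (simp add: nn_integral_cmult_indicator)
  also have "\<dots> \<le> (\<Sum>n. ennreal (a n * (2 * r n)^2))"
  proof (intro suminf_le summableI)
    fix n
    have "ennreal (a n) * emeasure lborel (cball (0::real^2) (r n)) \<le> ennreal (a n) * ennreal ((2 * r n)^2)"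
      using r by (intro mult_left_mono emeasure_cball_le) auto
    then show "ennreal (a n) * emeasure lborel (cball (0::real^2) (r n)) \<le> ennreal (a n * (2 * r n)^2)"
      using a by (simp add: ennreal_mult)
  qed
  also have "\<dots> = ennreal (\<Sum>n. a n * (2 * r n)^2)"
    using sum a by (intro suminf_ennreal2) auto
  finally show ?thesis
    unfolding infinity_ennreal_def using ennreal_less_top by (rule le_less_trans)
qed

lemma kernel_majorant_le_shell_sums:
  assumes L: "0 \<le> L" and s: "0 < s"
  shows "ennreal (kernel_majorant L s z)
    \<le> (\<Sum>n. ennreal (L * (2 powr (-real n - 1)) powr (-1-s)) * indicator (cball 0 (2 powr (-real n))) z)
      + (\<Sum>n. ennreal ((2 powr real n) powr (-2-s)) * indicator (cball 0 (2 powr (real n + 1))) z)"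
    (is "_ \<le> suminf ?inner + suminf ?outer")
proof -
  have term_le_suminf: "f n \<le> suminf f" for f :: "nat \<Rightarrow> ennreal" and n
    using sum_le_suminf[of f "{n}"] by (simp add: summableI)
  show ?thesis
  proof (cases "z \<noteq> 0 \<and> norm z < 1")
    case True
    then obtain n where "norm z \<le> 2 powr (-real n)"
      and "kernel_majorant L s z \<le> L * (2 powr (-real n - 1)) powr (-1-s)"
      using kernel_majorant_le_inner_shell[OF L s] by blast
    then have "ennreal (kernel_majorant L s z) \<le> ?inner n" by (simp add: ennreal_leI)
    also have "\<dots> \<le> suminf ?inner" by (rule term_le_suminf)
    finally show ?thesis by (simp add: add_increasing2)
  next
    case False
    show ?thesis
    proof (cases "z = 0")
      case False
      with \<open>\<not> (z \<noteq> 0 \<and> norm z < 1)\<close> obtain n where "norm z \<le> 2 powr (real n + 1)"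
        and "kernel_majorant L s z \<le> (2 powr real n) powr (-2-s)"
        using kernel_majorant_le_outer_shell[OF s] by blast
      then have "ennreal (kernel_majorant L s z) \<le> ?outer n" by (simp add: ennreal_leI)
      also have "\<dots> \<le> suminf ?outer" by (rule term_le_suminf)
      finally show ?thesis by (simp add: add_increasing)
    qed (simp add: kernel_majorant_def)
  qed
qed

lemma kernel_mass_finite:
  assumes L: "0 \<le> L" and s: "0 < s" "s < 1"
  shows "kernel_mass L s < \<infinity>"
proof -
  define a where "a n = L * (2 powr (-real n - 1)) powr (-1-s)" for n :: nat
  define b where "b n = (2 powr real n) powr (-2-s)" for n :: nat
  define inner where
    "inner z = (\<Sum>n. ennreal (a n) * indicator (cball 0 (2 powr (-real n))) z)" for z :: "real^2"
  define outer where
    "outer z = (\<Sum>n. ennreal (b n) * indicator (cball 0 (2 powr (real n + 1))) z)" for z :: "real^2"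
  have "(\<lambda>n. a n * (2 * 2 powr (-real n))^2) = (\<lambda>n. L * (4 * 2 powr (1+s)) * (2 powr (s-1))^n)"
    using inner_shell_term_eq by (simp add: a_def fun_eq_iff mult.assoc)
  moreover have "\<bar>2 powr (s-1)\<bar> < 1" using s powr_less_mono[of "s-1" 0 2] by simp
  ultimately have "summable (\<lambda>n. a n * (2 * 2 powr (-real n))^2)"
    by (simp add: summable_mult summable_geometric)
  then have "integral\<^sup>N lborel inner < \<infinity>"
    unfolding inner_def using L by (intro nn_integral_suminf_cball_finite) (simp_all add: a_def)
  moreover have "summable (\<lambda>n. b n * (2 * 2 powr (real n + 1))^2)"
  proof -
    have "(\<lambda>n. b n * (2 * 2 powr (real n + 1))^2) = (\<lambda>n. 16 * (2 powr (-s))^n)"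
      using outer_shell_term_eq by (simp add: b_def fun_eq_iff)
    moreover have "\<bar>2 powr (-s)\<bar> < 1" using s powr_less_mono[of "-s" 0 2] by simp
    ultimately show ?thesis by (simp add: summable_mult summable_geometric)
  qed
  then have "integral\<^sup>N lborel outer < \<infinity>"
    unfolding outer_def by (intro nn_integral_suminf_cball_finite) (simp_all add: b_def)
  moreover have "(\<integral>\<^sup>+ z. ennreal (kernel_majorant L s z) \<partial>lborel) \<le> (\<integral>\<^sup>+ z. inner z + outer z \<partial>lborel)"
    unfolding inner_def outer_def a_def b_def
    by (intro nn_integral_mono kernel_majorant_le_shell_sums L s(1))
  moreover have "(\<integral>\<^sup>+ z. inner z + outer z \<partial>lborel) = integral\<^sup>N lborel inner + integral\<^sup>N lborel outer"
    unfolding inner_def outer_def measurable_lborel2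
    by (intro nn_integral_add borel_measurable_suminf_order) measurable
  ultimately show ?thesis
    unfolding kernel_mass_def
    by (metis (no_types, lifting) ennreal_add_eq_top infinity_ennreal_def le_less_trans less_top)
qed

section \<open>The integer lattice\<close>

definition lattice_pt :: "int \<times> int \<Rightarrow> real^2" where
  "lattice_pt m = (\<chi> i. if i = 1 then real_of_int (fst m) else real_of_int (snd m))"

definition lattice_floor :: "real^2 \<Rightarrow> int \<times> int" where
  "lattice_floor x = (\<lfloor>x$1\<rfloor>, \<lfloor>x$2\<rfloor>)"

lemma lattice_pt_nth [simp]:
  "lattice_pt m $ 1 = real_of_int (fst m)" "lattice_pt m $ 2 = real_of_int (snd m)"
  by (simp_all add: lattice_pt_def)

lemma norm_vec2_le: "norm (x::real^2) \<le> \<bar>x$1\<bar> + \<bar>x$2\<bar>"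
  using norm_triangle_ineq[of "x$1 *\<^sub>R axis 1 (1::real)" "x$2 *\<^sub>R axis 2 (1::real) :: real^2"]
  by (simp flip: vec2_eq_axis_sum)

lemma lattice_floor_le:
  "0 \<le> (x - lattice_pt (lattice_floor x))$1 \<and> (x - lattice_pt (lattice_floor x))$1 < 1"
  "0 \<le> (x - lattice_pt (lattice_floor x))$2 \<and> (x - lattice_pt (lattice_floor x))$2 < 1"
  by (simp_all add: lattice_floor_def, linarith+)

lemma norm_diff_lattice_floor_le: "norm (x - lattice_pt (lattice_floor x)) \<le> 2"
  using norm_vec2_le[of "x - lattice_pt (lattice_floor x)"] lattice_floor_le[of x] by linarith

lemma Bset_eq_lattice_translates: "Bset f = range (\<lambda>m x. f (x - lattice_pt m))"
proof (intro equalityI subsetI)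
  fix \<phi> assume "\<phi> \<in> Bset f"
  then obtain k :: "real^2" where k: "\<phi> = (\<lambda>x. f (x - k))" "\<forall>i. k $ i \<in> \<int>"
    unfolding Bset_def by blast
  obtain a b where "k $ 1 = real_of_int a" "k $ 2 = real_of_int b"
    using k(2) by (metis Ints_cases)
  then have "k = lattice_pt (a, b)" by (simp add: vec_eq_iff forall_2)
  then show "\<phi> \<in> range (\<lambda>m x. f (x - lattice_pt m))" using k by blast
next
  fix \<phi> assume "\<phi> \<in> range (\<lambda>m x. f (x - lattice_pt m))"
  moreover have "\<forall>i. lattice_pt m $ i \<in> \<int>" for m by (simp add: forall_2)
  ultimately show "\<phi> \<in> Bset f" unfolding Bset_def by blast
qed

lemma int_decode_le: "real n + 1 \<le> 2 * (1 + \<bar>real_of_int (int_decode n)\<bar>)"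
  unfolding int_decode_def sum_decode_def by (cases "even n") (auto elim!: evenE oddE)

lemma nn_integral_int_powr_finite:
  assumes p: "1 < p"
  shows "(\<integral>\<^sup>+ a. ennreal ((1 + \<bar>real_of_int a\<bar>) powr (-p)) \<partial>count_space (UNIV::int set)) < \<infinity>"
proof -
  have "(\<integral>\<^sup>+ a. ennreal ((1 + \<bar>real_of_int a\<bar>) powr (-p)) \<partial>count_space (UNIV::int set))
     = (\<Sum>n. ennreal ((1 + \<bar>real_of_int (int_decode n)\<bar>) powr (-p)))"
    using nn_integral_bij_count_space[OF bij_int_decode,
        of "\<lambda>a. ennreal ((1 + \<bar>real_of_int a\<bar>) powr (-p))"]
    by (simp add: nn_integral_count_space_nat)
  also have "\<dots> \<le> (\<Sum>n. ennreal (2 powr p * (real n + 1) powr (-p)))"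
  proof (intro suminf_le summableI ennreal_leI)
    fix n
    have "(1 + \<bar>real_of_int (int_decode n)\<bar>) powr (-p) \<le> ((real n + 1) / 2) powr (-p)"
      using int_decode_le[of n] p by (intro powr_mono2') auto
    also have "\<dots> = 2 powr p * (real n + 1) powr (-p)"
      by (simp add: powr_divide powr_minus divide_simps)
    finally show "(1 + \<bar>real_of_int (int_decode n)\<bar>) powr (-p) \<le> 2 powr p * (real n + 1) powr (-p)" .
  qed
  also have "\<dots> = ennreal (\<Sum>n. 2 powr p * (real n + 1) powr (-p))"
  proof (rule suminf_ennreal2)
    have "summable (\<lambda>n. real (Suc n) powr (-p))"
      using p by (subst summable_Suc_iff) (simp add: summable_real_powr_iff)
    then show "summable (\<lambda>n. 2 powr p * (real n + 1) powr (-p))"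
      by (simp add: add.commute summable_mult)
  qed simp
  finally show ?thesis
    unfolding infinity_ennreal_def using ennreal_less_top by (rule le_less_trans)
qed

definition lattice_weight :: "real \<Rightarrow> int \<times> int \<Rightarrow> real" where
  "lattice_weight p m = ((1 + \<bar>real_of_int (fst m)\<bar>) * (1 + \<bar>real_of_int (snd m)\<bar>)) powr (-p)"

lemma nn_integral_lattice_weight_finite:
  assumes "1 < p"
  shows "(\<integral>\<^sup>+ m. ennreal (lattice_weight p m) \<partial>count_space UNIV) < \<infinity>"
proof -
  define A where
    "A = (\<integral>\<^sup>+ a. ennreal ((1 + \<bar>real_of_int a\<bar>) powr (-p)) \<partial>count_space (UNIV::int set))"
  have "(\<integral>\<^sup>+ m. ennreal (lattice_weight p m) \<partial>count_space UNIV)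
      = (\<integral>\<^sup>+ a. \<integral>\<^sup>+ b. ennreal (lattice_weight p (a, b)) \<partial>count_space UNIV \<partial>count_space UNIV)"
    by (rule nn_integral_fst_count_space[symmetric])
  also have "\<dots> = (\<integral>\<^sup>+ a. ennreal ((1 + \<bar>real_of_int a\<bar>) powr (-p)) * A \<partial>count_space UNIV)"
    unfolding A_def lattice_weight_def
    by (simp add: powr_mult ennreal_mult nn_integral_cmult)
  also have "\<dots> = A * A" unfolding A_def by (simp add: nn_integral_multc)
  finally show ?thesis
    using nn_integral_int_powr_finite[OF assms] unfolding A_def by (simp add: ennreal_mult_less_top)
qed

lemma nn_integral_lattice_weight_shift:
  "(\<integral>\<^sup>+ m. ennreal (lattice_weight p (fst m - fst j, snd m - snd j)) \<partial>count_space UNIV)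
   = (\<integral>\<^sup>+ m. ennreal (lattice_weight p m) \<partial>count_space UNIV)"
proof -
  have "bij_betw (\<lambda>m::int\<times>int. (fst m - fst j, snd m - snd j)) UNIV UNIV"
    by (rule bij_betwI[where g="\<lambda>m. (fst m + fst j, snd m + snd j)"]) auto
  from nn_integral_bij_count_space[OF this, of "\<lambda>m. ennreal (lattice_weight p m)"]
  show ?thesis by simp
qed

lemma decay_le_lattice_weight:
  assumes "0 < s"
  shows "(2 + norm (y - lattice_pt j)) powr (-2-s)
    \<le> lattice_weight (1 + s/2) (fst (lattice_floor y) - fst j, snd (lattice_floor y) - snd j)"
proof -
  define N where "N = norm (y - lattice_pt j)"
  have c: "\<bar>(y - lattice_pt j)$i\<bar> \<le> N" for i unfolding N_def by (rule component_le_norm_cart)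
  have a: "1 + \<bar>real_of_int (fst (lattice_floor y) - fst j)\<bar> \<le> 2 + N"
    using c[of 1] unfolding lattice_floor_def by (simp, linarith)
  have b: "1 + \<bar>real_of_int (snd (lattice_floor y) - snd j)\<bar> \<le> 2 + N"
    using c[of 2] unfolding lattice_floor_def by (simp, linarith)
  have "0 \<le> N" unfolding N_def by simp
  then have "(2 + N) powr (-2-s) = ((2+N)*(2+N)) powr (-(1+s/2))"
    by (simp add: powr_mult powr_add[symmetric])
  also have "\<dots> \<le> ((1 + \<bar>real_of_int (fst (lattice_floor y) - fst j)\<bar>)
      * (1 + \<bar>real_of_int (snd (lattice_floor y) - snd j)\<bar>)) powr (-(1+s/2))"
    using a b assms by (intro powr_mono2') (auto intro!: mult_mono)
  finally show ?thesis by (simp add: lattice_weight_def N_def)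
qed

lemma nn_integral_lborel_translate:
  fixes f :: "'a::euclidean_space \<Rightarrow> ennreal"
  assumes "f \<in> borel_measurable borel"
  shows "(\<integral>\<^sup>+ x. f (x - y) \<partial>lborel) = integral\<^sup>N lborel f"
proof -
  have "integral\<^sup>N lborel f = integral\<^sup>N (distr lborel borel ((+) (-y))) f"
    by (simp add: lborel_distr_plus)
  also have "\<dots> = (\<integral>\<^sup>+ x. f (-y + x) \<partial>lborel)"
    using assms by (intro nn_integral_distr) auto
  finally show ?thesis by simp
qed

lemma nn_integral_kernel_majorant_translate:
  "(\<integral>\<^sup>+ y. ennreal (kernel_majorant L s (x - y)) \<partial>lborel) = kernel_mass L s"
proof -
  have "(\<integral>\<^sup>+ y. ennreal (kernel_majorant L s (x - y)) \<partial>lborel)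
      = (\<integral>\<^sup>+ y. ennreal (kernel_majorant L s (y - x)) \<partial>lborel)"
    by (simp add: kernel_majorant_minus_commute)
  also have "\<dots> = kernel_mass L s"
    unfolding kernel_mass_def by (rule nn_integral_lborel_translate) measurable
  finally show ?thesis .
qed

lemma kernel_majorant_conv_measurable [measurable]:
  assumes [measurable]: "f \<in> borel_measurable borel"
  shows "(\<lambda>x::real^2. \<integral>\<^sup>+ y. ennreal (kernel_majorant L s (x - y) * f y) \<partial>lborel) \<in> borel_measurable borel"
proof -
  have "(\<lambda>(x, y). ennreal (kernel_majorant L s (x - y) * f y))
      \<in> borel_measurable (lborel \<Otimes>\<^sub>M (lborel::(real^2) measure))"
    by measurable
  then show ?thesis
    using lborel.borel_measurable_nn_integral_fst[of "\<lambda>(x, y). ennreal (kernel_majorant L s (x - y) * f y)" lborel]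
    by simp
qed

lemma nn_integral_weighted_Cauchy_Schwarz:
  fixes g u :: "'a \<Rightarrow> real"
  assumes [measurable]: "g \<in> borel_measurable M" "u \<in> borel_measurable M"
    and g: "\<And>z. 0 \<le> g z"
  shows "(\<integral>\<^sup>+ y. ennreal (g y * \<bar>u y\<bar>) \<partial>M)^2
     \<le> (\<integral>\<^sup>+ y. ennreal (g y) \<partial>M) * (\<integral>\<^sup>+ y. ennreal (g y * (u y)\<^sup>2) \<partial>M)"
proof -
  define a where "a y = ennreal (sqrt (g y))" for y
  define b where "b y = ennreal (sqrt (g y) * \<bar>u y\<bar>)" for y
  have "(\<integral>\<^sup>+ y. a y * b y \<partial>M)^2 \<le> (\<integral>\<^sup>+ y. (a y)^2 \<partial>M) * (\<integral>\<^sup>+ y. (b y)^2 \<partial>M)"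
    by (rule Cauchy_Schwarz_nn_integral) (auto simp: a_def b_def)
  moreover have "a y * b y = ennreal (g y * \<bar>u y\<bar>)" for y
    using g[of y] by (simp add: a_def b_def ennreal_mult[symmetric] mult.assoc[symmetric])
  moreover have "(a y)^2 = ennreal (g y)" for y
    using g[of y] by (simp add: a_def ennreal_power)
  moreover have "(b y)^2 = ennreal (g y * (u y)\<^sup>2)" for y
    using g[of y] by (simp add: b_def ennreal_power power_mult_distrib)
  ultimately show ?thesis by simp
qed

lemma kernel_majorant_conv_square_le:
  fixes u :: "real^2 \<Rightarrow> real"
  assumes "0 \<le> L" and [measurable]: "u \<in> borel_measurable borel"
  shows "(\<integral>\<^sup>+ y. ennreal (kernel_majorant L s (x - y) * \<bar>u y\<bar>) \<partial>lborel)^2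
     \<le> kernel_mass L s * (\<integral>\<^sup>+ y. ennreal (kernel_majorant L s (x - y) * (u y)\<^sup>2) \<partial>lborel)"
  using nn_integral_weighted_Cauchy_Schwarz[of "\<lambda>y. kernel_majorant L s (x - y)" lborel u]
    kernel_majorant_nonneg[OF assms(1)]
  by (simp add: nn_integral_kernel_majorant_translate)

lemma kernel_majorant_far_le:
  assumes s: "0 < s" and x: "norm (x - c) \<le> 3" and far: "6 < norm (y - c)"
  shows "kernel_majorant L s (x - y) \<le> 4 powr (2+s) * (2 + norm (y - c)) powr (-2-s)"
proof -
  define N where "N = norm (y - c)"
  have "norm (y - c) \<le> norm (x - y) + norm (x - c)"
    using norm_triangle_ineq4[of "x - c" "x - y"] by (simp add: add.commute)
  then have d: "N / 2 \<le> norm (x - y)" "1 \<le> norm (x - y)" using x far N_def by auto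
  then have "kernel_majorant L s (x - y) = norm (x - y) powr (-2-s)"
    by (auto simp add: kernel_majorant_def)
  also have "\<dots> \<le> ((2 + N)/4) powr (-2-s)" using d far s N_def by (intro powr_mono2') auto
  also have "\<dots> = (2 + N) powr (-2-s) / 4 powr (-2-s)" using far N_def by (simp add: powr_divide)
  also have "\<dots> = 4 powr (2+s) * (2 + N) powr (-2-s)"
    using powr_minus[of 4 "2+s"] by (simp add: divide_inverse mult.commute)
  finally show ?thesis unfolding N_def .
qed

definition cball_decay_const :: "real \<Rightarrow> real \<Rightarrow> ennreal" where
  "cball_decay_const L s = kernel_mass L s * ennreal (8 powr (2+s)) + ennreal (36 * 4 powr (2+s))"

text \<open>Near \<open>c\<close> the mass of the kernel is the bound; far from \<open>c\<close> the kernel itself is of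
  size \<open>\<bar>y - c\<bar>\<^sup>-\<^sup>2\<^sup>-\<^sup>s\<close> on the whole ball.\<close>

lemma nn_integral_cball_kernel_majorant_le:
  assumes L: "0 \<le> L" and s: "0 < s"
  shows "(\<integral>\<^sup>+ x. ennreal (indicator (cball c 3) x * kernel_majorant L s (x - y)) \<partial>lborel)
     \<le> cball_decay_const L s * ennreal ((2 + norm (y - c)) powr (-2-s))"
  (is "?L \<le> _ * ennreal ?w")
proof (cases "norm (y - c) \<le> 6")
  case True
  have "?L \<le> (\<integral>\<^sup>+ x. ennreal (kernel_majorant L s (x - y)) \<partial>lborel)"
    using kernel_majorant_nonneg[OF L]
    by (intro nn_integral_mono ennreal_leI) (auto simp: indicator_def)
  also have "\<dots> = kernel_mass L s"
    using nn_integral_lborel_translate[of "\<lambda>z. ennreal (kernel_majorant L s z)" y]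
    by (simp add: kernel_mass_def)
  also have "\<dots> \<le> kernel_mass L s * ennreal (8 powr (2+s) * ?w)"
  proof -
    have pos: "0 < 2 + norm (y - c)" by (smt (verit) norm_ge_zero)
    then have "1 \<le> (8 / (2 + norm (y - c))) powr (2+s)"
      using True s by (intro ge_one_powr_ge_zero) (auto simp: le_divide_eq)
    also have "\<dots> = 8 powr (2+s) / (2 + norm (y - c)) powr (2+s)"
      using pos by (simp add: powr_divide)
    also have "\<dots> = 8 powr (2+s) * ?w"
      using powr_minus[of "2 + norm (y - c)" "2+s"] by (simp add: divide_inverse)
    finally show ?thesis using mult_left_mono[of "ennreal 1" _ "kernel_mass L s"] ennreal_leI by fastforce
  qed
  also have "\<dots> \<le> (kernel_mass L s * ennreal (8 powr (2+s)) + ennreal (36 * 4 powr (2+s))) * ennreal ?w"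
    by (simp add: ennreal_mult distrib_right mult.assoc add_increasing2)
  finally show ?thesis unfolding cball_decay_const_def .
next
  case False
  define K where "K = 4 powr (2+s) * ?w"
  have "?L \<le> (\<integral>\<^sup>+ x. ennreal K * indicator (cball c 3) x \<partial>lborel)"
  proof (intro nn_integral_mono)
    fix x
    show "ennreal (indicator (cball c 3) x * kernel_majorant L s (x - y)) \<le> ennreal K * indicator (cball c 3) x"
      using kernel_majorant_far_le[OF s, of x c y] False unfolding K_def
      by (cases "x \<in> cball c 3") (auto intro: ennreal_leI simp: dist_norm norm_minus_commute)
  qed
  also have "\<dots> = ennreal K * emeasure lborel (cball c 3)"
    by (simp add: nn_integral_cmult_indicator)
  also have "\<dots> \<le> ennreal K * ennreal 36"
    using emeasure_cball_le[of 3 c] by (intro mult_left_mono) auto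
  also have "\<dots> = ennreal (K * 36)" by (simp add: K_def ennreal_mult)
  also have "\<dots> = ennreal (36 * 4 powr (2+s) * ?w)" by (simp add: K_def mult_ac)
  also have "\<dots> = ennreal (36 * 4 powr (2+s)) * ennreal ?w" by (simp add: ennreal_mult)
  also have "\<dots> \<le> (kernel_mass L s * ennreal (8 powr (2+s)) + ennreal (36 * 4 powr (2+s))) * ennreal ?w"
    by (intro mult_right_mono add_increasing) auto
  finally show ?thesis unfolding cball_decay_const_def .
qed

lemma nn_integral_cball_kernel_majorant_conv_le:
  fixes u :: "real^2 \<Rightarrow> real"
  assumes L: "0 \<le> L" and s: "0 < s" and [measurable]: "u \<in> borel_measurable borel"
  shows "(\<integral>\<^sup>+ x. indicator (cball c 3) x
            * (\<integral>\<^sup>+ y. ennreal (kernel_majorant L s (x - y) * (u y)\<^sup>2) \<partial>lborel) \<partial>lborel)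
     \<le> cball_decay_const L s * (\<integral>\<^sup>+ y. ennreal ((u y)\<^sup>2 * (2 + norm (y - c)) powr (-2-s)) \<partial>lborel)"
proof -
  define C where "C = cball_decay_const L s"
  define k where "k x y = ennreal (indicator (cball c 3) x * kernel_majorant L s (x - y))" for x y
  have [measurable]: "(\<lambda>(x, y). k x y) \<in> borel_measurable (lborel \<Otimes>\<^sub>M lborel)"
    unfolding k_def by measurable
  have "(\<integral>\<^sup>+ x. indicator (cball c 3) x
            * (\<integral>\<^sup>+ y. ennreal (kernel_majorant L s (x - y) * (u y)\<^sup>2) \<partial>lborel) \<partial>lborel)
      = (\<integral>\<^sup>+ x. \<integral>\<^sup>+ y. k x y * ennreal ((u y)\<^sup>2) \<partial>lborel \<partial>lborel)"
    using kernel_majorant_nonneg[OF L]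
    by (subst nn_integral_cmult[symmetric])
      (auto simp: k_def ennreal_mult[symmetric] indicator_def intro!: nn_integral_cong)
  also have "\<dots> = (\<integral>\<^sup>+ y. \<integral>\<^sup>+ x. k x y * ennreal ((u y)\<^sup>2) \<partial>lborel \<partial>lborel)"
    by (rule lborel_pair.Fubini'[symmetric]) measurable
  also have "\<dots> = (\<integral>\<^sup>+ y. (\<integral>\<^sup>+ x. k x y \<partial>lborel) * ennreal ((u y)\<^sup>2) \<partial>lborel)"
    by (intro nn_integral_cong nn_integral_multc) (simp add: k_def)
  also have "\<dots> \<le> (\<integral>\<^sup>+ y. C * ennreal ((2 + norm (y - c)) powr (-2-s)) * ennreal ((u y)\<^sup>2) \<partial>lborel)"
    using nn_integral_cball_kernel_majorant_le[OF L s, of c] unfolding C_def k_def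
    by (intro nn_integral_mono mult_right_mono) auto
  also have "\<dots> = C * (\<integral>\<^sup>+ y. ennreal ((u y)\<^sup>2 * (2 + norm (y - c)) powr (-2-s)) \<partial>lborel)"
    by (subst nn_integral_cmult[symmetric]) (auto simp: ennreal_mult mult_ac intro!: nn_integral_cong)
  finally show ?thesis unfolding C_def .
qed

section \<open>Local and uniformly local \<open>L\<^sup>2\<close> norms\<close>

lemma nn_integral_square_eq_l2norm:
  assumes "f \<in> borel_measurable lebesgue" and "(\<integral>\<^sup>+ x. ennreal ((f x)\<^sup>2) \<partial>lebesgue) < \<infinity>"
  shows "(\<integral>\<^sup>+ x. ennreal ((f x)\<^sup>2) \<partial>lebesgue) = ennreal ((l2norm f)\<^sup>2)"
proof -
  have "(l2norm f)\<^sup>2 = (LINT x|lebesgue. (f x)\<^sup>2)"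
    unfolding l2norm_def by (simp add: integral_nonneg_AE)
  also have "\<dots> = enn2real (\<integral>\<^sup>+ x. ennreal ((f x)\<^sup>2) \<partial>lebesgue)"
    using assms(1) by (intro integral_eq_nn_integral) auto
  finally show ?thesis using assms(2) by simp
qed

lemma l2norm_le_sqrt:
  assumes "f \<in> borel_measurable lebesgue"
    and "(\<integral>\<^sup>+ x. ennreal ((f x)\<^sup>2) \<partial>lebesgue) \<le> ennreal Q" and "0 \<le> Q"
  shows "l2norm f \<le> sqrt Q"
proof -
  have "(LINT x|lebesgue. (f x)\<^sup>2) = enn2real (\<integral>\<^sup>+ x. ennreal ((f x)\<^sup>2) \<partial>lebesgue)"
    using assms(1) by (intro integral_eq_nn_integral) auto
  also have "\<dots> \<le> Q"
    using assms(2,3) enn2real_mono[OF assms(2)] by simp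
  finally show ?thesis unfolding l2norm_def by simp
qed

lemma l2norm_nonneg: "0 \<le> l2norm f"
  by (simp add: l2norm_def)

lemma l2norm_lattice_translate_le_uloc_norm:
  assumes "f \<in> L2uloc \<phi>0"
  shows "l2norm (\<lambda>x. \<phi>0 (x - lattice_pt m) * f x) \<le> uloc_norm \<phi>0 f"
  using assms unfolding uloc_norm_def L2uloc_def Bset_eq_lattice_translates
  by (intro cSUP_upper2[where x="\<lambda>x. \<phi>0 (x - lattice_pt m)"]) auto

lemma uloc_norm_nonneg: "f \<in> L2uloc \<phi>0 \<Longrightarrow> 0 \<le> uloc_norm \<phi>0 f"
  by (rule order_trans[OF l2norm_nonneg l2norm_lattice_translate_le_uloc_norm])

lemma L2uloc_if_lattice_bound:
  assumes "f \<in> L2loc" and "\<And>m. l2norm (\<lambda>x. \<phi>0 (x - lattice_pt m) * f x) \<le> C"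
  shows "f \<in> L2uloc \<phi>0" and "uloc_norm \<phi>0 f \<le> C"
  using assms unfolding L2uloc_def uloc_norm_def Bset_eq_lattice_translates
  by (auto intro!: bdd_aboveI2 cSUP_least)

lemma uloc_norm_cong_AE:
  assumes "\<And>c. (\<lambda>x. \<phi>0 (x - c)) \<in> borel_measurable lebesgue"
    and "f \<in> borel_measurable lebesgue" "g \<in> borel_measurable lebesgue"
    and "AE x in lebesgue. f x = g x"
  shows "uloc_norm \<phi>0 f = uloc_norm \<phi>0 g"
  unfolding uloc_norm_def Bset_def l2norm_def
  using assms by (intro SUP_cong refl arg_cong[where f=sqrt] integral_cong_AE) auto

lemma square_diff_le: "(a - b)\<^sup>2 \<le> 2 * a\<^sup>2 + 2 * (b::real)\<^sup>2"
  using zero_le_power2[of "a + b"] by (simp add: power2_eq_square algebra_simps)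

lemma L2loc_diff:
  assumes v: "v \<in> L2loc" and w: "w \<in> L2loc"
  shows "(\<lambda>x. v x - w x) \<in> L2loc"
  unfolding L2loc_def
proof (intro CollectI conjI allI impI)
  have vm: "v \<in> borel_measurable lebesgue" and wm: "w \<in> borel_measurable lebesgue"
    using v w unfolding L2loc_def by auto
  then show "(\<lambda>x. v x - w x) \<in> borel_measurable lebesgue" by measurable
  fix K :: "(real^2) set" assume K: "compact K"
  then have Km: "K \<in> sets lebesgue"
    by (intro sets_completionI_sets) (simp add: compact_imp_closed borel_closed)
  have "integrable lebesgue (\<lambda>x. 2 * (indicator K x *\<^sub>R (v x)\<^sup>2) + 2 * (indicator K x *\<^sub>R (w x)\<^sup>2))"
    using v w K unfolding L2loc_def set_integrable_def by auto
  then have "integrable lebesgue (\<lambda>x. indicator K x *\<^sub>R (v x - w x)\<^sup>2)"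
  proof (rule Bochner_Integration.integrable_bound)
    show "(\<lambda>x. indicator K x *\<^sub>R (v x - w x)\<^sup>2) \<in> borel_measurable lebesgue"
      using vm wm Km by measurable
    show "AE x in lebesgue. norm (indicator K x *\<^sub>R (v x - w x)\<^sup>2)
        \<le> norm (2 * (indicator K x *\<^sub>R (v x)\<^sup>2) + 2 * (indicator K x *\<^sub>R (w x)\<^sup>2))"
    proof (intro AE_I2)
      fix x
      show "norm (indicator K x *\<^sub>R (v x - w x)\<^sup>2)
          \<le> norm (2 * (indicator K x *\<^sub>R (v x)\<^sup>2) + 2 * (indicator K x *\<^sub>R (w x)\<^sup>2))"
        using square_diff_le[of "v x" "w x"] by (auto simp: indicator_def)
    qed
  qed
  then show "set_integrable lebesgue K (\<lambda>x. (v x - w x)\<^sup>2)" unfolding set_integrable_def .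
qed

locale cutoff =
  fixes \<phi>0 :: "real^2 \<Rightarrow> real" and B :: real
  assumes ge_0: "\<And>x. 0 \<le> \<phi>0 x" and le_1: "\<And>x. \<phi>0 x \<le> 1"
    and eq_1: "\<And>x. norm x \<le> 2 \<Longrightarrow> \<phi>0 x = 1"
    and eq_0: "\<And>x. 3 \<le> norm x \<Longrightarrow> \<phi>0 x = 0"
    and lipschitz_nonneg: "0 \<le> B"
    and lipschitz: "\<And>x y. \<bar>\<phi>0 x - \<phi>0 y\<bar> \<le> B * norm (x - y)"
begin

lemma measurable_cutoff [measurable]: "\<phi>0 \<in> borel_measurable borel"
proof -
  have "B-lipschitz_on UNIV \<phi>0"
    using lipschitz lipschitz_nonneg by (intro lipschitz_onI) (simp_all add: dist_real_def dist_norm)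
  then show ?thesis by (intro borel_measurable_continuous_onI lipschitz_on_continuous_on)
qed

lemma measurable_translate [measurable]: "(\<lambda>x. \<phi>0 (x - c)) \<in> borel_measurable lebesgue"
  by (intro measurable_completion) measurable

lemma eq_1_at_lattice_floor: "\<phi>0 (x - lattice_pt (lattice_floor x)) = 1"
  using eq_1 norm_diff_lattice_floor_le by blast

lemma square_translate_le_indicator: "(\<phi>0 (x - c))\<^sup>2 \<le> indicator (cball c 3) x"
proof (cases "x \<in> cball c 3")
  case True
  then show ?thesis using ge_0[of "x - c"] le_1[of "x - c"] by (simp add: power_le_one)
next
  case False
  then show ?thesis using eq_0[of "x - c"] by (simp add: dist_norm norm_minus_commute)
qed

lemma nn_integral_translate_square_finite:
  assumes "w \<in> L2loc"
  shows "(\<integral>\<^sup>+ x. ennreal ((\<phi>0 (x - c) * w x)\<^sup>2) \<partial>lebesgue) < \<infinity>"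
proof -
  have "(\<integral>\<^sup>+ x. ennreal ((\<phi>0 (x - c) * w x)\<^sup>2) \<partial>lebesgue)
      \<le> (\<integral>\<^sup>+ x. ennreal (norm (indicator (cball c 3) x *\<^sub>R (w x)\<^sup>2)) \<partial>lebesgue)"
  proof (intro nn_integral_mono ennreal_leI)
    fix x
    have "(\<phi>0 (x - c) * w x)\<^sup>2 = (\<phi>0 (x - c))\<^sup>2 * (w x)\<^sup>2" by (simp add: power_mult_distrib)
    also have "\<dots> \<le> indicator (cball c 3) x * (w x)\<^sup>2"
      using square_translate_le_indicator by (intro mult_right_mono) auto
    finally show "(\<phi>0 (x - c) * w x)\<^sup>2 \<le> norm (indicator (cball c 3) x *\<^sub>R (w x)\<^sup>2)"
      by (simp add: abs_mult)
  qed
  also have "\<dots> < \<infinity>"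
    using assms unfolding L2loc_def set_integrable_def by (simp add: integrable_iff_bounded)
  finally show ?thesis .
qed

lemma nn_integral_translate_square_le_uloc:
  assumes w: "w \<in> L2uloc \<phi>0"
  shows "(\<integral>\<^sup>+ x. ennreal ((\<phi>0 (x - lattice_pt m) * w x)\<^sup>2) \<partial>lebesgue) \<le> ennreal ((uloc_norm \<phi>0 w)\<^sup>2)"
proof -
  have "w \<in> L2loc" using w by (simp add: L2uloc_def)
  then have "(\<integral>\<^sup>+ x. ennreal ((\<phi>0 (x - lattice_pt m) * w x)\<^sup>2) \<partial>lebesgue)
      = ennreal ((l2norm (\<lambda>x. \<phi>0 (x - lattice_pt m) * w x))\<^sup>2)"
    by (intro nn_integral_square_eq_l2norm nn_integral_translate_square_finite)
      (auto simp: L2loc_def)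
  also have "\<dots> \<le> ennreal ((uloc_norm \<phi>0 w)\<^sup>2)"
    using l2norm_lattice_translate_le_uloc_norm[OF w] l2norm_nonneg
    by (intro ennreal_leI power_mono) auto
  finally show ?thesis .
qed

text \<open>Tonelli on \<open>lborel \<Otimes>\<^sub>M lborel\<close> needs Borel measurable integrands, while members of
  \<open>L2uloc\<close> are only Lebesgue measurable; hence we pass to a Borel function equal a.e.\<close>

lemma borel_representative:
  assumes w: "w \<in> L2uloc \<phi>0"
  obtains w' where "w' \<in> borel_measurable borel" and "AE y in lebesgue. w y = w' y"
    and "\<And>m. (\<integral>\<^sup>+ y. ennreal ((\<phi>0 (y - lattice_pt m))\<^sup>2 * (w' y)\<^sup>2) \<partial>lborel)
        \<le> ennreal ((uloc_norm \<phi>0 w)\<^sup>2)"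
proof -
  have "w \<in> borel_measurable lebesgue" using w unfolding L2uloc_def L2loc_def by auto
  from completion_ex_borel_measurable_real[OF this]
  obtain w' where w': "w' \<in> borel_measurable borel" and "AE y in lborel. w y = w' y"
    by auto
  then have ae: "AE y in lebesgue. w y = w' y" by (auto intro: AE_completion)
  have "(\<integral>\<^sup>+ y. ennreal ((\<phi>0 (y - lattice_pt m))\<^sup>2 * (w' y)\<^sup>2) \<partial>lborel)
      \<le> ennreal ((uloc_norm \<phi>0 w)\<^sup>2)" for m
  proof -
    have "(\<integral>\<^sup>+ y. ennreal ((\<phi>0 (y - lattice_pt m))\<^sup>2 * (w' y)\<^sup>2) \<partial>lborel)
        = (\<integral>\<^sup>+ y. ennreal ((\<phi>0 (y - lattice_pt m) * w y)\<^sup>2) \<partial>lebesgue)"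
      using ae w' by (subst nn_integral_completion[symmetric])
        (auto intro!: nn_integral_cong_AE simp: power_mult_distrib)
    also have "\<dots> \<le> ennreal ((uloc_norm \<phi>0 w)\<^sup>2)"
      by (rule nn_integral_translate_square_le_uloc[OF w])
    finally show ?thesis .
  qed
  with w' ae show thesis by (rule that)
qed

lemma L2uloc_diff:
  assumes v: "v \<in> L2uloc \<phi>0" and w: "w \<in> L2uloc \<phi>0"
  shows "(\<lambda>x. v x - w x) \<in> L2uloc \<phi>0"
proof (rule L2uloc_if_lattice_bound)
  have vl: "v \<in> L2loc" and wl: "w \<in> L2loc" using v w unfolding L2uloc_def by auto
  then show "(\<lambda>x. v x - w x) \<in> L2loc" by (rule L2loc_diff)
  fix m
  let ?\<phi> = "\<lambda>x. \<phi>0 (x - lattice_pt m)"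
  define Q where "Q = 2 * (uloc_norm \<phi>0 v)\<^sup>2 + 2 * (uloc_norm \<phi>0 w)\<^sup>2"
  have [measurable]: "v \<in> borel_measurable lebesgue" "w \<in> borel_measurable lebesgue"
    using vl wl unfolding L2loc_def by auto
  have "(\<integral>\<^sup>+ x. ennreal ((?\<phi> x * (v x - w x))\<^sup>2) \<partial>lebesgue)
      \<le> (\<integral>\<^sup>+ x. 2 * ennreal ((?\<phi> x * v x)\<^sup>2) + 2 * ennreal ((?\<phi> x * w x)\<^sup>2) \<partial>lebesgue)"
  proof (intro nn_integral_mono)
    fix x
    have "(?\<phi> x * (v x - w x))\<^sup>2 \<le> 2 * (?\<phi> x * v x)\<^sup>2 + 2 * (?\<phi> x * w x)\<^sup>2"
      using square_diff_le[of "?\<phi> x * v x" "?\<phi> x * w x"] by (simp add: right_diff_distrib)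
    then have "ennreal ((?\<phi> x * (v x - w x))\<^sup>2) \<le> ennreal (2 * (?\<phi> x * v x)\<^sup>2 + 2 * (?\<phi> x * w x)\<^sup>2)"
      by (rule ennreal_leI)
    then show "ennreal ((?\<phi> x * (v x - w x))\<^sup>2) \<le> 2 * ennreal ((?\<phi> x * v x)\<^sup>2) + 2 * ennreal ((?\<phi> x * w x)\<^sup>2)"
      by (simp add: ennreal_plus ennreal_mult)
  qed
  also have "\<dots> = 2 * (\<integral>\<^sup>+ x. ennreal ((?\<phi> x * v x)\<^sup>2) \<partial>lebesgue) + 2 * (\<integral>\<^sup>+ x. ennreal ((?\<phi> x * w x)\<^sup>2) \<partial>lebesgue)"
    by (subst nn_integral_add) (auto simp: nn_integral_cmult)
  also have "\<dots> \<le> 2 * ennreal ((uloc_norm \<phi>0 v)\<^sup>2) + 2 * ennreal ((uloc_norm \<phi>0 w)\<^sup>2)"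
    using nn_integral_translate_square_le_uloc[OF v] nn_integral_translate_square_le_uloc[OF w]
    by (intro add_mono mult_left_mono) auto
  also have "\<dots> = ennreal Q" unfolding Q_def by (simp add: ennreal_plus ennreal_mult)
  finally show "l2norm (\<lambda>x. ?\<phi> x * (v x - w x)) \<le> sqrt Q"
    by (intro l2norm_le_sqrt) (auto simp: Q_def)
qed

lemma L2loc_if_translate_bounds:
  assumes [measurable]: "F \<in> borel_measurable lebesgue"
    and fin: "\<And>m. (\<integral>\<^sup>+ x. ennreal ((\<phi>0 (x - lattice_pt m) * F x)\<^sup>2) \<partial>lebesgue) < \<infinity>"
  shows "F \<in> L2loc"
  unfolding L2loc_def
proof (intro CollectI conjI allI impI)
  fix K :: "(real^2) set" assume K: "compact K"
  then obtain R where R: "\<forall>x\<in>K. norm x \<le> R" using compact_imp_bounded bounded_iff by blast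
  define N :: int where "N = \<lceil>R\<rceil> + 1"
  define cells where "cells = {-N..N} \<times> {-N..N}"
  have "finite cells" unfolding cells_def by simp
  have Km: "K \<in> sets lebesgue"
    using K by (intro sets_completionI_sets) (simp add: compact_imp_closed borel_closed)
  have cover: "ennreal (norm (indicator K x *\<^sub>R (F x)\<^sup>2))
      \<le> (\<Sum>m\<in>cells. ennreal ((\<phi>0 (x - lattice_pt m) * F x)\<^sup>2))" for x
  proof (cases "x \<in> K")
    case True
    have "\<bar>x$1\<bar> \<le> R" "\<bar>x$2\<bar> \<le> R"
      using R True component_le_norm_cart[of x 1] component_le_norm_cart[of x 2] by force+
    then have "lattice_floor x \<in> cells" unfolding lattice_floor_def cells_def N_def by (auto, linarith+)
    then have "ennreal ((\<phi>0 (x - lattice_pt (lattice_floor x)) * F x)\<^sup>2)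
        \<le> (\<Sum>m\<in>cells. ennreal ((\<phi>0 (x - lattice_pt m) * F x)\<^sup>2))"
      using \<open>finite cells\<close> by (intro member_le_sum) auto
    then show ?thesis using True by (simp add: eq_1_at_lattice_floor)
  qed simp
  have "(\<integral>\<^sup>+ x. ennreal (norm (indicator K x *\<^sub>R (F x)\<^sup>2)) \<partial>lebesgue)
      \<le> (\<integral>\<^sup>+ x. (\<Sum>m\<in>cells. ennreal ((\<phi>0 (x - lattice_pt m) * F x)\<^sup>2)) \<partial>lebesgue)"
    by (intro nn_integral_mono cover)
  also have "\<dots> = (\<Sum>m\<in>cells. (\<integral>\<^sup>+ x. ennreal ((\<phi>0 (x - lattice_pt m) * F x)\<^sup>2) \<partial>lebesgue))"
    by (intro nn_integral_sum) measurable
  also have "\<dots> < \<infinity>" using fin \<open>finite cells\<close> by (simp add: ennreal_sum_less_top)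
  finally show "set_integrable lebesgue K (\<lambda>x. (F x)\<^sup>2)"
    unfolding set_integrable_def using Km by (intro integrableI_bounded) auto
qed (fact assms(1))

lemma decay_le_lattice_sum:
  assumes "0 < s"
  shows "ennreal ((u y)\<^sup>2 * (2 + norm (y - lattice_pt j)) powr (-2-s))
    \<le> (\<integral>\<^sup>+ m. ennreal (lattice_weight (1 + s/2) (fst m - fst j, snd m - snd j)
           * ((\<phi>0 (y - lattice_pt m))\<^sup>2 * (u y)\<^sup>2)) \<partial>count_space UNIV)"
    (is "_ \<le> (\<integral>\<^sup>+ m. ?F m \<partial>count_space UNIV)")
proof -
  have "ennreal ((u y)\<^sup>2 * (2 + norm (y - lattice_pt j)) powr (-2-s)) \<le> ?F (lattice_floor y)"
    using decay_le_lattice_weight[OF assms, of y j]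
    by (intro ennreal_leI) (simp add: eq_1_at_lattice_floor mult_left_mono mult.commute)
  also have "\<dots> \<le> (\<integral>\<^sup>+ m. ?F m \<partial>count_space UNIV)" by (rule nn_integral_ge_point) simp
  finally show ?thesis .
qed

lemma nn_integral_decay_le_uloc:
  fixes u :: "real^2 \<Rightarrow> real"
  assumes s: "0 < s" and [measurable]: "u \<in> borel_measurable borel"
    and U: "\<And>m. (\<integral>\<^sup>+ y. ennreal ((\<phi>0 (y - lattice_pt m))\<^sup>2 * (u y)\<^sup>2) \<partial>lborel) \<le> Usq"
  shows "(\<integral>\<^sup>+ y. ennreal ((u y)\<^sup>2 * (2 + norm (y - lattice_pt j)) powr (-2-s)) \<partial>lborel)
         \<le> Usq * (\<integral>\<^sup>+ m. ennreal (lattice_weight (1 + s/2) m) \<partial>count_space UNIV)"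
proof -
  define \<rho> where "\<rho> m = lattice_weight (1 + s/2) (fst m - fst j, snd m - snd j)" for m
  define F where "F m y = ennreal (\<rho> m * ((\<phi>0 (y - lattice_pt m))\<^sup>2 * (u y)\<^sup>2))"
    for m :: "int \<times> int" and y :: "real^2"
  have \<rho>: "0 \<le> \<rho> m" for m by (simp add: \<rho>_def lattice_weight_def)
  have "pair_sigma_finite (count_space (UNIV::(int \<times> int) set)) (lborel :: (real^2) measure)"
    by (intro pair_sigma_finite.intro sigma_finite_measure_count_space lborel.sigma_finite_measure_axioms)
  moreover have "(\<lambda>(m, y). F m y) \<in> borel_measurable (count_space UNIV \<Otimes>\<^sub>M lborel)"
    by (rule measurable_pair_measure_countable1) (auto simp: F_def)
  ultimately have Fubini: "(\<integral>\<^sup>+ y. (\<integral>\<^sup>+ m. F m y \<partial>count_space UNIV) \<partial>lborel)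
      = (\<integral>\<^sup>+ m. (\<integral>\<^sup>+ y. F m y \<partial>lborel) \<partial>count_space UNIV)"
    by (rule pair_sigma_finite.Fubini')
  have "(\<integral>\<^sup>+ y. ennreal ((u y)\<^sup>2 * (2 + norm (y - lattice_pt j)) powr (-2-s)) \<partial>lborel)
      \<le> (\<integral>\<^sup>+ m. (\<integral>\<^sup>+ y. F m y \<partial>lborel) \<partial>count_space UNIV)"
    unfolding Fubini[symmetric] by (intro nn_integral_mono) (unfold F_def \<rho>_def, rule decay_le_lattice_sum[OF s])
  also have "\<dots> \<le> (\<integral>\<^sup>+ m. ennreal (\<rho> m) * Usq \<partial>count_space UNIV)"
  proof (intro nn_integral_mono)
    fix m
    have "(\<integral>\<^sup>+ y. F m y \<partial>lborel)
        = ennreal (\<rho> m) * (\<integral>\<^sup>+ y. ennreal ((\<phi>0 (y - lattice_pt m))\<^sup>2 * (u y)\<^sup>2) \<partial>lborel)"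
      unfolding F_def using \<rho> by (simp add: ennreal_mult nn_integral_cmult)
    also have "\<dots> \<le> ennreal (\<rho> m) * Usq" by (intro mult_left_mono U) simp
    finally show "(\<integral>\<^sup>+ y. F m y \<partial>lborel) \<le> ennreal (\<rho> m) * Usq" .
  qed
  also have "\<dots> = (\<integral>\<^sup>+ m. ennreal (\<rho> m) \<partial>count_space UNIV) * Usq"
    by (simp add: nn_integral_multc)
  also have "\<dots> = Usq * (\<integral>\<^sup>+ m. ennreal (lattice_weight (1 + s/2) m) \<partial>count_space UNIV)"
    unfolding \<rho>_def nn_integral_lattice_weight_shift by (simp add: mult.commute)
  finally show ?thesis .
qed

end

section \<open>The commutator on uniformly local \<open>L\<^sup>2\<close>\<close>

locale commutator = cutoff +
  fixes s :: real
  assumes s_pos: "0 < s" and s_lt_1: "s < 1"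
begin

abbreviation comm :: "real^2 \<Rightarrow> (real^2 \<Rightarrow> real) \<Rightarrow> real^2 \<Rightarrow> real" where
  "comm k \<equiv> Tcomm s (\<lambda>x. \<phi>0 (x - k))"

definition local_const :: ennreal where
  "local_const = kernel_mass B s * cball_decay_const B s
     * (\<integral>\<^sup>+ m. ennreal (lattice_weight (1 + s/2) m) \<partial>count_space UNIV)"

lemma local_const_finite: "local_const < \<infinity>"
  using kernel_mass_finite[OF lipschitz_nonneg s_pos s_lt_1]
    nn_integral_lattice_weight_finite[of "1 + s/2"] s_pos
  unfolding local_const_def cball_decay_const_def by (simp add: ennreal_mult_less_top)

definition op_const :: real where
  "op_const = \<bar>frac_const s\<bar> * sqrt (enn2real local_const)"

lemma local_square_estimate:
  fixes u :: "real^2 \<Rightarrow> real" and \<Phi> :: "real^2 \<Rightarrow> ennreal"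
  assumes [measurable]: "u \<in> borel_measurable borel"
    and U: "\<And>m. (\<integral>\<^sup>+ y. ennreal ((\<phi>0 (y - lattice_pt m))\<^sup>2 * (u y)\<^sup>2) \<partial>lborel) \<le> Usq"
    and \<Phi>: "AE x in lebesgue. \<Phi> x \<le> (\<integral>\<^sup>+ y. ennreal (kernel_majorant B s (x - y) * \<bar>u y\<bar>) \<partial>lborel)"
  shows "(\<integral>\<^sup>+ x. ennreal ((\<phi>0 (x - lattice_pt j))\<^sup>2) * (\<Phi> x)^2 \<partial>lebesgue) \<le> local_const * Usq"
proof -
  define c where "c = lattice_pt j"
  define G where "G = kernel_mass B s"
  define I where "I x = (\<integral>\<^sup>+ y. ennreal (kernel_majorant B s (x - y) * (u y)\<^sup>2) \<partial>lborel)" for x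
  have [measurable]: "I \<in> borel_measurable borel" unfolding I_def by measurable
  have "AE x in lebesgue. ennreal ((\<phi>0 (x - c))\<^sup>2) * (\<Phi> x)^2 \<le> indicator (cball c 3) x * (G * I x)"
    using \<Phi>
  proof eventually_elim
    case (elim x)
    then have "(\<Phi> x)^2 \<le> (\<integral>\<^sup>+ y. ennreal (kernel_majorant B s (x - y) * \<bar>u y\<bar>) \<partial>lborel)^2"
      by (intro power_mono) auto
    also have "\<dots> \<le> G * I x"
      unfolding G_def I_def by (rule kernel_majorant_conv_square_le[OF lipschitz_nonneg]) measurable
    finally have "(\<Phi> x)^2 \<le> G * I x" .
    then have "ennreal ((\<phi>0 (x - c))\<^sup>2) * (\<Phi> x)^2 \<le> ennreal (indicator (cball c 3) x) * (G * I x)"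
      using square_translate_le_indicator[of x c] by (intro mult_mono ennreal_leI) auto
    then show ?case by (simp add: ennreal_indicator)
  qed
  then have "(\<integral>\<^sup>+ x. ennreal ((\<phi>0 (x - c))\<^sup>2) * (\<Phi> x)^2 \<partial>lebesgue)
      \<le> (\<integral>\<^sup>+ x. indicator (cball c 3) x * (G * I x) \<partial>lebesgue)"
    by (rule nn_integral_mono_AE)
  also have "\<dots> = G * (\<integral>\<^sup>+ x. indicator (cball c 3) x * I x \<partial>lborel)"
    by (subst nn_integral_completion) (auto simp: nn_integral_cmult[symmetric] mult.left_commute)
  also have "\<dots> \<le> G * (cball_decay_const B s
      * (\<integral>\<^sup>+ y. ennreal ((u y)\<^sup>2 * (2 + norm (y - c)) powr (-2-s)) \<partial>lborel))"
    unfolding I_def G_def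
    by (intro mult_left_mono nn_integral_cball_kernel_majorant_conv_le lipschitz_nonneg s_pos) auto
  also have "\<dots> \<le> G * (cball_decay_const B s
      * (Usq * (\<integral>\<^sup>+ m. ennreal (lattice_weight (1 + s/2) m) \<partial>count_space UNIV)))"
    unfolding c_def by (intro mult_left_mono nn_integral_decay_le_uloc[OF s_pos _ U]) auto
  also have "\<dots> = local_const * Usq"
    unfolding local_const_def G_def by (simp add: mult_ac)
  finally show ?thesis unfolding c_def .
qed

lemma commutator_integrand_le:
  "\<bar>(\<phi>0 (x - k) - \<phi>0 (y - k)) * w / norm (x - y) powr (2+s)\<bar> \<le> kernel_majorant B s (x - y) * \<bar>w\<bar>"
proof -
  define d where "d = \<phi>0 (x - k) - \<phi>0 (y - k)"
  define r where "r = norm (x - y)"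
  have d_lip: "\<bar>d\<bar> \<le> B * r" using lipschitz[of "x - k" "y - k"] by (simp add: d_def r_def)
  have d_le_1: "\<bar>d\<bar> \<le> 1" using ge_0 le_1 unfolding d_def by (smt (verit))
  have lhs: "\<bar>(\<phi>0 (x - k) - \<phi>0 (y - k)) * w / norm (x - y) powr (2+s)\<bar> = \<bar>d\<bar> * \<bar>w\<bar> / r powr (2+s)"
    by (simp add: d_def r_def abs_mult)
  show ?thesis
  proof (cases "x = y")
    case True
    then show ?thesis by (simp add: kernel_majorant_def)
  next
    case False
    then have r0: "0 < r" by (simp add: r_def)
    show ?thesis
    proof (cases "r < 1")
      case True
      have "\<bar>d\<bar> * \<bar>w\<bar> / r powr (2+s) \<le> B * r * \<bar>w\<bar> / r powr (2+s)"
        using d_lip r0 by (intro divide_right_mono mult_right_mono) auto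
      also have "\<dots> = B * r powr (-1-s) * \<bar>w\<bar>"
        using r0 powr_diff[of r 1 "2+s"] by simp
      finally show ?thesis using lhs True False by (simp add: kernel_majorant_def r_def)
    next
      case False
      have "\<bar>d\<bar> * \<bar>w\<bar> / r powr (2+s) \<le> 1 * \<bar>w\<bar> / r powr (2+s)"
        using d_le_1 r0 by (intro divide_right_mono mult_right_mono) auto
      also have "\<dots> = r powr (-2-s) * \<bar>w\<bar>"
        using r0 powr_diff[of r 0 "2+s"] by simp
      finally show ?thesis using lhs False \<open>x \<noteq> y\<close> by (simp add: kernel_majorant_def r_def)
    qed
  qed
qed

lemma commutator_integrand_measurable:
  assumes [measurable]: "w \<in> borel_measurable lebesgue"
  shows "(\<lambda>y. (\<phi>0 (x - k) - \<phi>0 (y - k)) * w y / norm (x - y) powr (2+s)) \<in> borel_measurable lebesgue"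
proof -
  have "(\<lambda>y. norm (x - y) powr (2+s)) \<in> borel_measurable lebesgue"
    by (intro measurable_completion) measurable
  then show ?thesis by measurable
qed

lemma Tcomm_measurable:
  assumes "w \<in> borel_measurable lebesgue"
  shows "comm k w \<in> borel_measurable lebesgue"
proof -
  obtain w' where [measurable]: "w' \<in> borel_measurable borel" and "AE y in lborel. w y = w' y"
    using completion_ex_borel_measurable_real[OF assms] by auto
  then have ae: "AE y in lebesgue. w y = w' y" by (auto intro: AE_completion)
  define H where "H x y = (\<phi>0 (x - k) - \<phi>0 (y - k)) * w' y / norm (x - y) powr (2+s)" for x y :: "real^2"
  have "comm k w = (\<lambda>x. frac_const s * (LINT y|lborel. H x y))"
  proof
    fix x
    have "(LINT y|lebesgue. (\<phi>0 (x - k) - \<phi>0 (y - k)) * w y / norm (x - y) powr (2+s))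
        = (LINT y|lebesgue. H x y)"
      using ae commutator_integrand_measurable[OF assms(1)]
      by (intro integral_cong_AE) (auto simp: H_def intro: measurable_completion)
    also have "\<dots> = (LINT y|lborel. H x y)"
      unfolding H_def by (intro integral_completion) measurable
    finally show "comm k w x = frac_const s * (LINT y|lborel. H x y)"
      unfolding Tcomm_def by simp
  qed
  moreover have "(\<lambda>x. frac_const s * (LINT y|lborel. H x y)) \<in> borel_measurable lebesgue"
  proof -
    have "(\<lambda>(x, y). H x y) \<in> borel_measurable (lborel \<Otimes>\<^sub>M (lborel::(real^2) measure))"
      unfolding H_def by measurable
    then have "(\<lambda>x. LINT y|lborel. H x y) \<in> borel_measurable lborel"
      by (rule lborel.borel_measurable_lebesgue_integral)
    then have "(\<lambda>x. frac_const s * (LINT y|lborel. H x y)) \<in> borel_measurable lborel"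
      by measurable
    then show ?thesis by (rule measurable_completion)
  qed
  ultimately show ?thesis by simp
qed

lemma abs_Tcomm_le:
  assumes ae: "AE y in lebesgue. w y = w' y" and [measurable]: "w' \<in> borel_measurable borel"
  shows "ennreal \<bar>comm k w x\<bar>
     \<le> (\<integral>\<^sup>+ y. ennreal (kernel_majorant B s (x - y) * \<bar>frac_const s * w' y\<bar>) \<partial>lborel)"
proof -
  define h where "h y = (\<phi>0 (x - k) - \<phi>0 (y - k)) * w y / norm (x - y) powr (2+s)" for y
  have bound: "ennreal \<bar>LINT y|lebesgue. h y\<bar>
      \<le> (\<integral>\<^sup>+ y. ennreal (kernel_majorant B s (x - y) * \<bar>w' y\<bar>) \<partial>lborel)"
  proof (cases "integrable lebesgue h")
    case True
    have "ennreal \<bar>LINT y|lebesgue. h y\<bar> \<le> (\<integral>\<^sup>+ y. ennreal (norm (h y)) \<partial>lebesgue)"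
      using integral_norm_bound_ennreal[OF True] by simp
    also have "\<dots> \<le> (\<integral>\<^sup>+ y. ennreal (kernel_majorant B s (x - y) * \<bar>w y\<bar>) \<partial>lebesgue)"
      unfolding h_def using commutator_integrand_le by (intro nn_integral_mono ennreal_leI) simp
    also have "\<dots> = (\<integral>\<^sup>+ y. ennreal (kernel_majorant B s (x - y) * \<bar>w' y\<bar>) \<partial>lborel)"
      using ae by (subst nn_integral_completion[symmetric]) (auto intro: nn_integral_cong_AE)
    finally show ?thesis .
  qed (simp add: not_integrable_integral_eq)
  have "ennreal \<bar>comm k w x\<bar> = ennreal \<bar>frac_const s\<bar> * ennreal \<bar>LINT y|lebesgue. h y\<bar>"
    unfolding Tcomm_def h_def by (simp add: abs_mult ennreal_mult)
  also have "\<dots> \<le> ennreal \<bar>frac_const s\<bar> * (\<integral>\<^sup>+ y. ennreal (kernel_majorant B s (x - y) * \<bar>w' y\<bar>) \<partial>lborel)"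
    using bound by (rule mult_left_mono) simp
  also have "\<dots> = (\<integral>\<^sup>+ y. ennreal (kernel_majorant B s (x - y) * \<bar>frac_const s * w' y\<bar>) \<partial>lborel)"
    using kernel_majorant_nonneg[OF lipschitz_nonneg]
    by (subst nn_integral_cmult[symmetric])
      (auto simp: ennreal_mult[symmetric] abs_mult mult_ac intro!: nn_integral_cong)
  finally show ?thesis .
qed
lemma commutator_integrand_integrable:
  assumes "w \<in> borel_measurable lebesgue" and ae: "AE y in lebesgue. w y = w' y"
    and fin: "(\<integral>\<^sup>+ y. ennreal (kernel_majorant B s (x - y) * \<bar>w' y\<bar>) \<partial>lborel) < \<infinity>"
  shows "integrable lebesgue (\<lambda>y. (\<phi>0 (x - k) - \<phi>0 (y - k)) * w y / norm (x - y) powr (2+s))"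
proof -
  have "(\<integral>\<^sup>+ y. ennreal (norm ((\<phi>0 (x - k) - \<phi>0 (y - k)) * w y / norm (x - y) powr (2+s))) \<partial>lebesgue)
      \<le> (\<integral>\<^sup>+ y. ennreal (kernel_majorant B s (x - y) * \<bar>w y\<bar>) \<partial>lebesgue)"
    using commutator_integrand_le by (intro nn_integral_mono ennreal_leI) simp
  also have "\<dots> = (\<integral>\<^sup>+ y. ennreal (kernel_majorant B s (x - y) * \<bar>w' y\<bar>) \<partial>lborel)"
    using ae by (subst nn_integral_completion[symmetric]) (auto intro: nn_integral_cong_AE)
  finally show ?thesis
    using fin by (intro integrableI_bounded commutator_integrand_measurable assms(1)) (simp add: le_less_trans)
qed

lemma kernel_majorant_conv_finite_AE:
  fixes u :: "real^2 \<Rightarrow> real"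
  assumes [measurable]: "u \<in> borel_measurable borel"
    and U: "\<And>m. (\<integral>\<^sup>+ y. ennreal ((\<phi>0 (y - lattice_pt m))\<^sup>2 * (u y)\<^sup>2) \<partial>lborel) \<le> ennreal Q"
  shows "AE x in lebesgue. (\<integral>\<^sup>+ y. ennreal (kernel_majorant B s (x - y) * \<bar>u y\<bar>) \<partial>lborel) < \<infinity>"
proof -
  define J where "J x = (\<integral>\<^sup>+ y. ennreal (kernel_majorant B s (x - y) * \<bar>u y\<bar>) \<partial>lborel)" for x
  have [measurable]: "J \<in> borel_measurable lebesgue"
    unfolding J_def by (intro measurable_completion) measurable
  have "AE x in lebesgue. ennreal ((\<phi>0 (x - lattice_pt m))\<^sup>2) * (J x)^2 \<noteq> \<infinity>" for m
  proof (rule nn_integral_PInf_AE)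
    show "(\<lambda>x. ennreal ((\<phi>0 (x - lattice_pt m))\<^sup>2) * (J x)^2) \<in> borel_measurable lebesgue"
      by measurable
    have "(\<integral>\<^sup>+ x. ennreal ((\<phi>0 (x - lattice_pt m))\<^sup>2) * (J x)^2 \<partial>lebesgue) \<le> local_const * ennreal Q"
      by (rule local_square_estimate[OF assms]) (simp add: J_def)
    also have "\<dots> < \<infinity>" using local_const_finite by (simp add: ennreal_mult_less_top)
    finally show "(\<integral>\<^sup>+ x. ennreal ((\<phi>0 (x - lattice_pt m))\<^sup>2) * (J x)^2 \<partial>lebesgue) \<noteq> \<infinity>" by simp
  qed
  then have "AE x in lebesgue. \<forall>m. ennreal ((\<phi>0 (x - lattice_pt m))\<^sup>2) * (J x)^2 \<noteq> \<infinity>"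
    by (simp add: AE_all_countable)
  then show ?thesis
  proof (rule AE_mp, intro AE_I2 impI)
    fix x assume "\<forall>m. ennreal ((\<phi>0 (x - lattice_pt m))\<^sup>2) * (J x)^2 \<noteq> \<infinity>"
    then have "(J x)^2 \<noteq> \<infinity>"
      using eq_1_at_lattice_floor[of x] by (metis ennreal_1 mult_1 power_one)
    then show "(\<integral>\<^sup>+ y. ennreal (kernel_majorant B s (x - y) * \<bar>u y\<bar>) \<partial>lborel) < \<infinity>"
      unfolding J_def by (simp add: power_eq_top_ennreal top.not_eq_extremum)
  qed
qed

lemma commutator_integrand_integrable_AE:
  assumes w: "w \<in> L2uloc \<phi>0"
  shows "AE x in lebesgue. integrable lebesgue (\<lambda>y. (\<phi>0 (x - k) - \<phi>0 (y - k)) * w y / norm (x - y) powr (2+s))"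
proof -
  obtain w' where w': "w' \<in> borel_measurable borel" and ae: "AE y in lebesgue. w y = w' y"
    and U: "\<And>m. (\<integral>\<^sup>+ y. ennreal ((\<phi>0 (y - lattice_pt m))\<^sup>2 * (w' y)\<^sup>2) \<partial>lborel) \<le> ennreal ((uloc_norm \<phi>0 w)\<^sup>2)"
    using borel_representative[OF w] by blast
  have wm: "w \<in> borel_measurable lebesgue" using w unfolding L2uloc_def L2loc_def by auto
  from kernel_majorant_conv_finite_AE[OF w' U] show ?thesis
    by eventually_elim (rule commutator_integrand_integrable[OF wm ae])
qed

lemma Tcomm_diff_AE:
  assumes "v \<in> L2uloc \<phi>0" and "w \<in> L2uloc \<phi>0"
  shows "AE x in lebesgue. comm k v x - comm k w x = comm k (\<lambda>y. v y - w y) x"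
  using commutator_integrand_integrable_AE[OF assms(1), where k=k]
    commutator_integrand_integrable_AE[OF assms(2), where k=k]
proof eventually_elim
  case (elim x)
  let ?I = "\<lambda>u y. (\<phi>0 (x - k) - \<phi>0 (y - k)) * u y / norm (x - y) powr (2+s)"
  have "?I (\<lambda>y. v y - w y) = (\<lambda>y. ?I v y - ?I w y)"
    by (simp add: fun_eq_iff diff_divide_distrib right_diff_distrib)
  then have "(LINT y|lebesgue. ?I (\<lambda>y. v y - w y) y) = (LINT y|lebesgue. ?I v y) - (LINT y|lebesgue. ?I w y)"
    using Bochner_Integration.integral_diff[OF elim] by (simp only:)
  then show ?case unfolding Tcomm_def by (simp only: right_diff_distrib)
qed

lemma Tcomm_local_estimate:
  assumes w: "w \<in> L2uloc \<phi>0"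
  shows "(\<integral>\<^sup>+ x. ennreal ((\<phi>0 (x - lattice_pt j) * comm k w x)\<^sup>2) \<partial>lebesgue)
    \<le> ennreal ((op_const * uloc_norm \<phi>0 w)\<^sup>2)"
proof -
  define c where "c = frac_const s"
  obtain w' where [measurable]: "w' \<in> borel_measurable borel" and ae: "AE y in lebesgue. w y = w' y"
    and U: "\<And>m. (\<integral>\<^sup>+ y. ennreal ((\<phi>0 (y - lattice_pt m))\<^sup>2 * (w' y)\<^sup>2) \<partial>lborel) \<le> ennreal ((uloc_norm \<phi>0 w)\<^sup>2)"
    using borel_representative[OF w] by blast
  have cU: "(\<integral>\<^sup>+ y. ennreal ((\<phi>0 (y - lattice_pt m))\<^sup>2 * (c * w' y)\<^sup>2) \<partial>lborel)
      \<le> ennreal (c\<^sup>2 * (uloc_norm \<phi>0 w)\<^sup>2)" for m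
  proof -
    have "(\<integral>\<^sup>+ y. ennreal ((\<phi>0 (y - lattice_pt m))\<^sup>2 * (c * w' y)\<^sup>2) \<partial>lborel)
        = ennreal (c\<^sup>2) * (\<integral>\<^sup>+ y. ennreal ((\<phi>0 (y - lattice_pt m))\<^sup>2 * (w' y)\<^sup>2) \<partial>lborel)"
      by (subst nn_integral_cmult[symmetric])
        (auto simp: ennreal_mult[symmetric] power_mult_distrib mult_ac intro!: nn_integral_cong)
    also have "\<dots> \<le> ennreal (c\<^sup>2) * ennreal ((uloc_norm \<phi>0 w)\<^sup>2)"
      by (intro mult_left_mono U) auto
    finally show ?thesis by (simp add: ennreal_mult)
  qed
  have "(\<integral>\<^sup>+ x. ennreal ((\<phi>0 (x - lattice_pt j) * comm k w x)\<^sup>2) \<partial>lebesgue)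
      = (\<integral>\<^sup>+ x. ennreal ((\<phi>0 (x - lattice_pt j))\<^sup>2) * (ennreal \<bar>comm k w x\<bar>)^2 \<partial>lebesgue)"
    by (simp add: power_mult_distrib ennreal_mult ennreal_power)
  also have "\<dots> \<le> local_const * ennreal (c\<^sup>2 * (uloc_norm \<phi>0 w)\<^sup>2)"
    using abs_Tcomm_le[OF ae] unfolding c_def
    by (intro local_square_estimate[OF _ cU[unfolded c_def]]) auto
  also have "\<dots> = ennreal ((op_const * uloc_norm \<phi>0 w)\<^sup>2)"
  proof -
    obtain L where L: "local_const = ennreal L" "0 \<le> L"
      using local_const_finite by (cases local_const rule: ennreal_cases) auto
    then show ?thesis
      unfolding op_const_def c_def by (simp add: ennreal_mult[symmetric] power_mult_distrib mult_ac)
  qed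
  finally show ?thesis .
qed

lemma Tcomm_L2uloc:
  assumes w: "w \<in> L2uloc \<phi>0"
  shows "comm k w \<in> L2uloc \<phi>0" and "uloc_norm \<phi>0 (comm k w) \<le> op_const * uloc_norm \<phi>0 w"
proof -
  have [measurable]: "comm k w \<in> borel_measurable lebesgue"
    using w unfolding L2uloc_def L2loc_def by (auto intro: Tcomm_measurable)
  have "(\<integral>\<^sup>+ x. ennreal ((\<phi>0 (x - lattice_pt j) * comm k w x)\<^sup>2) \<partial>lebesgue) < \<infinity>" for j
    unfolding infinity_ennreal_def using Tcomm_local_estimate[OF w] ennreal_less_top
    by (rule le_less_trans)
  then have "comm k w \<in> L2loc" by (intro L2loc_if_translate_bounds) auto
  moreover have "l2norm (\<lambda>x. \<phi>0 (x - lattice_pt j) * comm k w x) \<le> op_const * uloc_norm \<phi>0 w" for j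
  proof -
    have "0 \<le> op_const * uloc_norm \<phi>0 w"
      using uloc_norm_nonneg[OF w] by (simp add: op_const_def)
    then show ?thesis
      using l2norm_le_sqrt[OF _ Tcomm_local_estimate[OF w]] by simp
  qed
  ultimately show "comm k w \<in> L2uloc \<phi>0" and "uloc_norm \<phi>0 (comm k w) \<le> op_const * uloc_norm \<phi>0 w"
    by (rule L2uloc_if_lattice_bound)+
qed

lemma Tcomm_uloc_continuous:
  assumes w: "w \<in> L2uloc \<phi>0" and "0 < \<epsilon>"
  shows "\<exists>\<delta>>0. \<forall>v\<in>L2uloc \<phi>0. uloc_norm \<phi>0 (\<lambda>x. v x - w x) < \<delta> \<longrightarrow>
      uloc_norm \<phi>0 (\<lambda>x. comm k v x - comm k w x) < \<epsilon>"
proof (intro exI conjI ballI impI)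
  have A: "0 \<le> op_const" by (simp add: op_const_def)
  then show "0 < \<epsilon> / (op_const + 1)" using assms(2) by simp
  fix v assume v: "v \<in> L2uloc \<phi>0" and close: "uloc_norm \<phi>0 (\<lambda>x. v x - w x) < \<epsilon> / (op_const + 1)"
  have d: "(\<lambda>x. v x - w x) \<in> L2uloc \<phi>0" using L2uloc_diff[OF v w] .
  have [measurable]: "f \<in> L2uloc \<phi>0 \<Longrightarrow> comm k f \<in> borel_measurable lebesgue" for f
    unfolding L2uloc_def L2loc_def by (auto intro: Tcomm_measurable)
  have "uloc_norm \<phi>0 (\<lambda>x. comm k v x - comm k w x) = uloc_norm \<phi>0 (comm k (\<lambda>x. v x - w x))"
    using v w d Tcomm_diff_AE[OF v w] by (intro uloc_norm_cong_AE) auto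
  also have "\<dots> \<le> op_const * uloc_norm \<phi>0 (\<lambda>x. v x - w x)"
    by (rule Tcomm_L2uloc(2)[OF d])
  also have "\<dots> \<le> (op_const + 1) * uloc_norm \<phi>0 (\<lambda>x. v x - w x)"
    using uloc_norm_nonneg[OF d] by (simp add: distrib_right)
  also have "\<dots> < \<epsilon>"
    using close A by (simp add: field_simps)
  finally show "uloc_norm \<phi>0 (\<lambda>x. comm k v x - comm k w x) < \<epsilon>" .
qed

end

theorem lemma3:
  fixes \<phi>0 \<phi> :: "real^2 \<Rightarrow> real" and s :: real
  assumes "smooth2 \<phi>0"
    and "\<forall>x. 0 \<le> \<phi>0 x \<and> \<phi>0 x \<le> 1"
    and "\<forall>x. norm x \<le> 2 \<longrightarrow> \<phi>0 x = 1"
    and "\<forall>x. norm x \<ge> 3 \<longrightarrow> \<phi>0 x = 0"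
    and "0 < s" and "s < 1"
    and "\<phi> \<in> Bset \<phi>0"
  shows "(\<forall>w\<in>L2uloc \<phi>0. Tcomm s \<phi> w \<in> L2uloc \<phi>0) \<and>
         (\<forall>w\<in>L2uloc \<phi>0. \<forall>\<epsilon>>0. \<exists>\<delta>>0. \<forall>v\<in>L2uloc \<phi>0.
            uloc_norm \<phi>0 (\<lambda>x. v x - w x) < \<delta> \<longrightarrow>
            uloc_norm \<phi>0 (\<lambda>x. Tcomm s \<phi> v x - Tcomm s \<phi> w x) < \<epsilon>)"
proof -
  obtain B where "0 \<le> B" and "\<And>x y. \<bar>\<phi>0 x - \<phi>0 y\<bar> \<le> B * norm (x - y)"
    using smooth2_lipschitz[of \<phi>0 3] assms(1,4) by auto
  then interpret commutator \<phi>0 B s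
    using assms(2-6) by unfold_locales auto
  obtain m where "\<phi> = (\<lambda>x. \<phi>0 (x - lattice_pt m))"
    using assms(7) unfolding Bset_eq_lattice_translates by blast
  then show ?thesis
    using Tcomm_L2uloc(1) Tcomm_uloc_continuous by simp
qed

end
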